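(* The space $(\mathbb{R}^{\mathbb{Z}_<},\tau_{\mathrm{St}})$ is not a Hausdorff space, but it is a preregular space (any two St-distinguishable points can be separated by disjoint neighbourhoods).
   Context: $\mathbb{R}^{\mathbb{Z}_<}$ is the set of formal series $\sum_{i\ge -k}a_i\epsilon^i$ ($k\in\mathbb{N}\cup\{0\}$, $a_i\in\mathbb{R}$), written $\langle a_{-k},\dots,\widehat{a_0},a_1,\dots\rangle$, with coefficientwise addition, Cauchy-product multiplication and lexicographic order ($\mathbf{x}<\mathbf{y}$ iff at the least index where coefficients differ, $\mathbf{x}$'s coefficient is smaller); reals are the elements with only $a_0$ possibly nonzero; $|\mathbf{x}|$ is the absolute value for this order. The metric is $d(\mathbf{x},\mathbf{y})=|\mathbf{y}-\mathbf{x}|\in\mathbb{R}^{\mathbb{Z}_<}$ and $B_{\mathbf{x}}(\mathbf{y})=\{\mathbf{z}: d(\mathbf{x},\mathbf{z})<\mathbf{y}\}$. A set $O$ is St-open iff for every $\mathbf{x}\in O$ there is $n\in\mathbb{N}$ with $B_{\mathbf{x}}(1/n)\subseteq O$; $\tau_{\mathrm{St}}$ is the topology generated by unions of balls with real radius (St-balls), i.e. the St-open sets. Two points are St-distinguishable iff some St-open set contains exactly one of them. *)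

theory Defs
  imports "HOL-Analysis.Analysis"
begin

text \<open>Elements of R^{Z_<}: coefficient functions int => real whose support is
bounded below (formal series sum_{i >= -k} a_i eps^i).\<close>

definition LC :: "(int \<Rightarrow> real) set" where
  "LC = {a. \<exists>k::int. \<forall>i<k. a i = 0}"

definition lc_zero :: "int \<Rightarrow> real" where
  "lc_zero = (\<lambda>i. 0)"

definition lc_of_real :: "real \<Rightarrow> (int \<Rightarrow> real)" where
  "lc_of_real r = (\<lambda>i. if i = 0 then r else 0)"

definition lc_add :: "(int \<Rightarrow> real) \<Rightarrow> (int \<Rightarrow> real) \<Rightarrow> (int \<Rightarrow> real)" where
  "lc_add x y = (\<lambda>i. x i + y i)"

definition lc_neg :: "(int \<Rightarrow> real) \<Rightarrow> (int \<Rightarrow> real)" where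
  "lc_neg x = (\<lambda>i. - x i)"

definition lc_minus :: "(int \<Rightarrow> real) \<Rightarrow> (int \<Rightarrow> real) \<Rightarrow> (int \<Rightarrow> real)" where
  "lc_minus x y = (\<lambda>i. x i - y i)"

definition lc_mult :: "(int \<Rightarrow> real) \<Rightarrow> (int \<Rightarrow> real) \<Rightarrow> (int \<Rightarrow> real)" where
  "lc_mult x y = (\<lambda>k. \<Sum>i\<in>{i. x i \<noteq> 0 \<and> y (k - i) \<noteq> 0}. x i * y (k - i))"

definition lc_less :: "(int \<Rightarrow> real) \<Rightarrow> (int \<Rightarrow> real) \<Rightarrow> bool" where
  "lc_less x y \<longleftrightarrow> (\<exists>i. x i < y i \<and> (\<forall>j<i. x j = y j))"

definition lc_abs :: "(int \<Rightarrow> real) \<Rightarrow> (int \<Rightarrow> real)" where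
  "lc_abs x = (if lc_less x lc_zero then lc_neg x else x)"

definition lc_dist :: "(int \<Rightarrow> real) \<Rightarrow> (int \<Rightarrow> real) \<Rightarrow> (int \<Rightarrow> real)" where
  "lc_dist x y = lc_abs (lc_minus y x)"

definition lc_ball :: "(int \<Rightarrow> real) \<Rightarrow> (int \<Rightarrow> real) \<Rightarrow> (int \<Rightarrow> real) set" where
  "lc_ball x r = {z \<in> LC. lc_less (lc_dist x z) r}"

definition St_open :: "(int \<Rightarrow> real) set \<Rightarrow> bool" where
  "St_open S \<longleftrightarrow> S \<subseteq> LC \<and>
     (\<forall>x\<in>S. \<exists>n::nat. n > 0 \<and> lc_ball x (lc_of_real (1 / real n)) \<subseteq> S)"

definition tau_St :: "(int \<Rightarrow> real) topology" where
  "tau_St = topology St_open"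

definition preregular_space :: "'a topology \<Rightarrow> bool" where
  "preregular_space X \<longleftrightarrow>
     (\<forall>x\<in>topspace X. \<forall>y\<in>topspace X.
        (\<exists>U. openin X U \<and> ((x \<in> U) \<noteq> (y \<in> U))) \<longrightarrow>
        (\<exists>U V. openin X U \<and> openin X V \<and> x \<in> U \<and> y \<in> V \<and> disjnt U V))"

end

theory Submission
  imports Defs
begin

text \<open>A ball of real radius \<open>r > 0\<close> around \<open>x\<close> contains every point agreeing with \<open>x\<close> at all
indices \<open>\<le> 0\<close>, and only points agreeing with \<open>x\<close> at all indices \<open>< 0\<close> whose \<open>0\<close>-th coefficients
differ by at most \<open>r\<close>. Hence the map sending a series to its coefficients of non-positive index,
with the discrete topology on the negative part and the usual one on the real part, is
continuous, and St-open sets are unions of its fibres. Points in one fibre, such as \<open>0\<close>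
and \<open>\<epsilon>\<close>, are inseparable, so the space is not Hausdorff; points in different fibres are
separated by preimages of disjoint open sets of the Hausdorff target.\<close>

lemma preregular_space_from_Hausdorff_map:
  assumes f: "continuous_map X Y f" and "Hausdorff_space Y"
    and fibre: "\<And>x y U. \<lbrakk>x \<in> topspace X; y \<in> topspace X; f x = f y; openin X U; x \<in> U\<rbrakk> \<Longrightarrow> y \<in> U"
  shows "preregular_space X"
  unfolding preregular_space_def
proof (intro ballI impI)
  fix x y assume x: "x \<in> topspace X" and y: "y \<in> topspace X"
    and "\<exists>U. openin X U \<and> (x \<in> U) \<noteq> (y \<in> U)"
  then have "f x \<noteq> f y" using fibre by metis
  moreover have "f x \<in> topspace Y" "f y \<in> topspace Y"
    using f x y by (auto simp: continuous_map_def)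
  ultimately obtain U V where "openin Y U" "openin Y V" "f x \<in> U" "f y \<in> V" "disjnt U V"
    using \<open>Hausdorff_space Y\<close> unfolding Hausdorff_space_def by blast
  then show "\<exists>U V. openin X U \<and> openin X V \<and> x \<in> U \<and> y \<in> V \<and> disjnt U V"
    using f x y by (intro exI[of _ "{z \<in> topspace X. f z \<in> U}"] exI[of _ "{z \<in> topspace X. f z \<in> V}"])
      (auto simp: continuous_map_def disjnt_iff)
qed

lemma not_Hausdorff_space_if_inseparable:
  assumes "x \<in> topspace X" "y \<in> topspace X" "x \<noteq> y"
    and "\<And>U. \<lbrakk>openin X U; x \<in> U\<rbrakk> \<Longrightarrow> y \<in> U"
  shows "\<not> Hausdorff_space X"
  using assms Hausdorff_imp_t1_space unfolding t1_space_def by blast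

lemma lc_less_trans:
  assumes "lc_less x y" "lc_less y z"
  shows "lc_less x z"
proof -
  obtain i where i: "x i < y i" "\<forall>j<i. x j = y j" using assms(1) by (auto simp: lc_less_def)
  obtain k where k: "y k < z k" "\<forall>j<k. y j = z j" using assms(2) by (auto simp: lc_less_def)
  consider "i < k" | "i = k" | "k < i" by linarith
  then show ?thesis
    by cases (use i k in \<open>auto simp: lc_less_def intro!: exI[of _ "min i k"]\<close>)
qed

lemma lc_less_of_real_mono:
  assumes "lc_less x (lc_of_real r)" "r \<le> s"
  shows "lc_less x (lc_of_real s)"
proof (cases "r = s")
  case False
  then have "lc_less (lc_of_real r) (lc_of_real s)"
    using assms(2) by (auto simp: lc_less_def lc_of_real_def intro!: exI[of _ 0])
  with assms(1) show ?thesis by (rule lc_less_trans)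
qed (use assms in simp)

lemma lc_abs_not_negative: "\<not> lc_less (lc_abs d) lc_zero"
proof
  assume "lc_less (lc_abs d) lc_zero"
  then obtain i where i: "lc_abs d i < 0" "\<forall>j<i. lc_abs d j = 0"
    by (auto simp: lc_less_def lc_zero_def)
  show False
  proof (cases "lc_less d lc_zero")
    case True
    then obtain k where "d k < 0" "\<forall>j<k. d j = 0"
      by (auto simp: lc_less_def lc_zero_def)
    moreover have "d i > 0" "\<forall>j<i. d j = 0"
      using i True by (auto simp: lc_abs_def lc_neg_def)
    ultimately show False by (cases i k rule: linorder_cases) auto
  next
    case False
    then have "lc_abs d = d" by (simp add: lc_abs_def)
    with i have "lc_less d lc_zero" by (auto simp: lc_less_def lc_zero_def)
    with False show False ..
  qed
qed

lemma lc_abs_less_of_realD: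
  assumes "lc_less (lc_abs d) (lc_of_real r)" "r > 0"
  shows "\<forall>j<0. d j = 0" "\<bar>d 0\<bar> \<le> r"
proof -
  have abs_eq: "\<bar>lc_abs d j\<bar> = \<bar>d j\<bar>" for j by (simp add: lc_abs_def lc_neg_def)
  obtain i where i: "lc_abs d i < lc_of_real r i" "\<forall>j<i. lc_abs d j = lc_of_real r j"
    using assms(1) by (auto simp: lc_less_def)
  have "i \<ge> 0"
  proof (rule ccontr)
    assume "\<not> i \<ge> 0"
    with i have "lc_less (lc_abs d) lc_zero" by (auto simp: lc_less_def lc_zero_def lc_of_real_def)
    with lc_abs_not_negative show False by blast
  qed
  show "\<forall>j<0. d j = 0"
  proof (intro allI impI)
    fix j :: int assume "j < 0"
    with i(2) \<open>i \<ge> 0\<close> have "lc_abs d j = 0" by (auto simp: lc_of_real_def)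
    then show "d j = 0" using abs_eq[of j] by simp
  qed
  have "lc_abs d 0 \<le> r"
    using i \<open>i \<ge> 0\<close> by (cases "i = 0") (auto simp: lc_of_real_def)
  moreover have "lc_abs d 0 \<ge> 0"
  proof (rule ccontr)
    assume "\<not> lc_abs d 0 \<ge> 0"
    with i \<open>i \<ge> 0\<close> have "lc_less (lc_abs d) lc_zero"
      by (auto simp: lc_less_def lc_zero_def lc_of_real_def intro!: exI[of _ 0])
    with lc_abs_not_negative show False by blast
  qed
  ultimately show "\<bar>d 0\<bar> \<le> r" using abs_eq[of 0] by linarith
qed

lemma lc_ball_subset_LC: "lc_ball x r \<subseteq> LC"
  by (auto simp: lc_ball_def)

lemma lc_ball_of_realD:
  assumes "z \<in> lc_ball x (lc_of_real r)" "r > 0"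
  shows "\<forall>j<0. z j = x j" "\<bar>z 0 - x 0\<bar> \<le> r"
  using assms lc_abs_less_of_realD[of "lc_minus z x" r]
  by (auto simp: lc_ball_def lc_dist_def lc_minus_def)

lemma lc_ball_of_realI:
  assumes "z \<in> LC" "\<forall>j\<le>0. z j = x j" "r > 0"
  shows "z \<in> lc_ball x (lc_of_real r)"
proof -
  have "lc_less (lc_abs (lc_minus z x)) (lc_of_real r)"
    using assms
    by (auto simp: lc_less_def lc_abs_def lc_neg_def lc_zero_def lc_minus_def lc_of_real_def
        intro!: exI[of _ 0])
  with assms(1) show ?thesis by (simp add: lc_ball_def lc_dist_def)
qed

lemma lc_ball_of_real_mono:
  "r \<le> s \<Longrightarrow> lc_ball x (lc_of_real r) \<subseteq> lc_ball x (lc_of_real s)"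
  unfolding lc_ball_def using lc_less_of_real_mono by blast

lemma St_openI:
  assumes "S \<subseteq> LC"
    and "\<And>x. x \<in> S \<Longrightarrow> \<exists>n::nat. n > 0 \<and> lc_ball x (lc_of_real (1 / real n)) \<subseteq> S"
  shows "St_open S"
  using assms unfolding St_open_def by blast

lemma St_openE:
  assumes "St_open S" "x \<in> S"
  obtains n :: nat where "n > 0" "lc_ball x (lc_of_real (1 / real n)) \<subseteq> S"
  using assms unfolding St_open_def by blast

lemma istopology_St_open: "istopology St_open"
  unfolding istopology_def
proof (intro conjI allI impI)
  fix S T assume S: "St_open S" and T: "St_open T"
  show "St_open (S \<inter> T)"
  proof (rule St_openI)
    show "S \<inter> T \<subseteq> LC" using S by (auto simp: St_open_def)
  next
    fix x assume "x \<in> S \<inter> T"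
    then obtain m n :: nat where "m > 0" "lc_ball x (lc_of_real (1 / real m)) \<subseteq> S"
      and "n > 0" "lc_ball x (lc_of_real (1 / real n)) \<subseteq> T"
      using St_openE[OF S] St_openE[OF T] by (metis IntD1 IntD2)
    moreover have "lc_ball x (lc_of_real (1 / real (max m n))) \<subseteq> lc_ball x (lc_of_real (1 / real k))"
      if "k \<in> {m, n}" "k > 0" for k
      using that by (intro lc_ball_of_real_mono) (auto simp: frac_le)
    ultimately show "\<exists>k::nat. k > 0 \<and> lc_ball x (lc_of_real (1 / real k)) \<subseteq> S \<inter> T"
      by (intro exI[of _ "max m n"]) (simp add: subset_iff)
  qed
next
  fix K assume K: "\<forall>S\<in>K. St_open S"
  show "St_open (\<Union>K)"
  proof (rule St_openI)
    show "\<Union>K \<subseteq> LC" using K by (auto simp: St_open_def)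
  next
    fix x assume "x \<in> \<Union>K"
    then obtain S where "S \<in> K" "x \<in> S" by blast
    with K obtain n :: nat where "n > 0" "lc_ball x (lc_of_real (1 / real n)) \<subseteq> S"
      by (meson St_openE)
    with \<open>S \<in> K\<close> show "\<exists>n::nat. n > 0 \<and> lc_ball x (lc_of_real (1 / real n)) \<subseteq> \<Union>K"
      by blast
  qed
qed

lemma openin_tau_St: "openin tau_St = St_open"
  by (simp add: tau_St_def istopology_St_open)

lemma topspace_tau_St: "topspace tau_St = LC"
proof -
  have "St_open LC"
    by (rule St_openI) (auto simp: lc_ball_def intro: exI[of _ 1])
  then show ?thesis
    unfolding topspace_def openin_tau_St by (auto simp: St_open_def)
qed

definition lc_lead :: "(int \<Rightarrow> real) \<Rightarrow> (int \<Rightarrow> real) \<times> real" where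
  "lc_lead z = ((\<lambda>j. if j < 0 then z j else 0), z 0)"

lemma continuous_map_tau_StI:
  assumes "f \<in> LC \<rightarrow> topspace Y" "\<And>U. openin Y U \<Longrightarrow> St_open {z \<in> LC. f z \<in> U}"
  shows "continuous_map tau_St Y f"
  using assms unfolding continuous_map_def openin_tau_St topspace_tau_St by blast

lemma continuous_map_lc_lead_infinite:
  "continuous_map tau_St (discrete_topology UNIV) (fst \<circ> lc_lead)"
proof (rule continuous_map_tau_StI)
  fix U :: "(int \<Rightarrow> real) set"
  show "St_open {z \<in> LC. (fst \<circ> lc_lead) z \<in> U}" (is "St_open ?P")
  proof (rule St_openI)
    fix z assume z: "z \<in> ?P"
    have "fst (lc_lead w) = fst (lc_lead z)" if "w \<in> lc_ball z (lc_of_real 1)" for w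
      using lc_ball_of_realD(1)[OF that] by (auto simp: lc_lead_def)
    with z have "lc_ball z (lc_of_real (1 / real (1::nat))) \<subseteq> ?P"
      using lc_ball_subset_LC by auto
    then show "\<exists>n::nat. n > 0 \<and> lc_ball z (lc_of_real (1 / real n)) \<subseteq> ?P"
      by blast
  qed blast
qed simp

lemma continuous_map_lc_lead_standard:
  "continuous_map tau_St euclideanreal (snd \<circ> lc_lead)"
proof (rule continuous_map_tau_StI)
  fix A :: "real set" assume "openin euclideanreal A"
  show "St_open {z \<in> LC. (snd \<circ> lc_lead) z \<in> A}" (is "St_open ?P")
  proof (rule St_openI)
    fix z assume z: "z \<in> ?P"
    then obtain e where "e > 0" "ball (z 0) e \<subseteq> A"
      using \<open>openin euclideanreal A\<close> by (auto simp: lc_lead_def open_contains_ball)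
    obtain n :: nat where "n > 0" "1 / real n < e"
      using ex_inverse_of_nat_less[OF \<open>e > 0\<close>] by (auto simp: field_simps)
    have "w \<in> ?P" if "w \<in> lc_ball z (lc_of_real (1 / real n))" for w
    proof -
      have "\<bar>w 0 - z 0\<bar> < e"
        using lc_ball_of_realD(2)[OF that] \<open>n > 0\<close> \<open>1 / real n < e\<close> by simp
      then have "w 0 \<in> A"
        using \<open>ball (z 0) e \<subseteq> A\<close> by (auto simp: dist_real_def)
      with that lc_ball_subset_LC show ?thesis
        by (auto simp: lc_lead_def)
    qed
    with \<open>n > 0\<close> show "\<exists>n::nat. n > 0 \<and> lc_ball z (lc_of_real (1 / real n)) \<subseteq> ?P"
      by blast
  qed blast
qed simp

lemma continuous_map_lc_lead:
  "continuous_map tau_St (prod_topology (discrete_topology UNIV) euclideanreal) lc_lead"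
  using continuous_map_lc_lead_infinite continuous_map_lc_lead_standard
  by (simp add: continuous_map_pairwise)

lemma lc_lead_eq_iff: "lc_lead x = lc_lead y \<longleftrightarrow> (\<forall>j\<le>0. x j = y j)"
  by (auto simp: lc_lead_def fun_eq_iff le_less)

lemma openin_tau_St_lc_lead_saturated:
  assumes "openin tau_St U" "x \<in> U" "y \<in> LC" "lc_lead x = lc_lead y"
  shows "y \<in> U"
proof -
  obtain n :: nat where "n > 0" "lc_ball x (lc_of_real (1 / real n)) \<subseteq> U"
    using assms(1,2) by (auto simp: openin_tau_St elim: St_openE)
  moreover have "\<forall>j\<le>0. y j = x j"
    using assms(4) by (simp add: lc_lead_eq_iff)
  ultimately show ?thesis
    using lc_ball_of_realI[OF assms(3)] by auto
qed

theorem mainTheorem2: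
  shows "\<not> Hausdorff_space tau_St \<and> preregular_space tau_St"
proof
  define eps :: "int \<Rightarrow> real" where "eps = (\<lambda>i. if i = 1 then 1 else 0)"
  have "lc_zero \<in> LC" "eps \<in> LC"
    by (auto simp: LC_def lc_zero_def eps_def intro!: exI[of _ 0])
  moreover have "lc_zero \<noteq> eps" "lc_lead lc_zero = lc_lead eps"
    by (auto simp: lc_zero_def eps_def lc_lead_eq_iff fun_eq_iff)
  ultimately show "\<not> Hausdorff_space tau_St"
    using openin_tau_St_lc_lead_saturated
    by (intro not_Hausdorff_space_if_inseparable[of lc_zero _ eps]) (auto simp: topspace_tau_St)
next
  show "preregular_space tau_St"
    by (rule preregular_space_from_Hausdorff_map[OF continuous_map_lc_lead])
      (auto simp: Hausdorff_space_prod_topology topspace_tau_St intro: openin_tau_St_lc_lead_saturated)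
qed

end
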